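(* In a public goods economy (as in the context), let $\mathbf{a}$ be an outcome with $\mathbf{0}<\mathbf{a}<\mathbf{1}$. Then $\mathbf{a}$ is Pareto efficient if and only if there exist directions $\mathbf{v}_{up}>\mathbf{0}$ and $\mathbf{v}_{down}<\mathbf{0}$ such that $\mathbf{d}_{\mathbf{v}_{up}}\mathbf{u}(\mathbf{a})\le\mathbf{0}$ and $\mathbf{d}_{\mathbf{v}_{down}}\mathbf{u}(\mathbf{a})\le\mathbf{0}$.
   Context: Agents $N=\{1,\dots,n\}$; outcomes are vectors in $[0,1]^n$. Vector orderings: $\mathbf{x}\ge\mathbf{y}$ (resp. $\le$) means $x_i\ge y_i$ (resp. $\le$) for all $i$; $\mathbf{x}>\mathbf{y}$ (resp. $<$) means strict inequality in every coordinate; $\mathbf{x}\gneq\mathbf{y}$ means $\mathbf{x}\ge\mathbf{y}$ and $x_j>y_j$ for some $j$. The utility function $\mathbf{u}:[0,1]^n\to[0,1]^n$ is continuous, concave, and has positive externalities: whenever $\mathbf{a}\gneq\mathbf{a}'$ and $a_i=a'_i$, then $u_i(\mathbf{a})>u_i(\mathbf{a}')$. $\mathbf{a}$ is Pareto efficient if there is no outcome $\mathbf{a}'$ with $\mathbf{u}(\mathbf{a}')\gneq\mathbf{u}(\mathbf{a})$. For $\mathbf{v}\in\mathbb{R}^n$, $\mathbf{d}_{\mathbf{v}}\mathbf{u}(\mathbf{a}):=\lim_{\lambda\to0^+}\frac{\mathbf{u}(\mathbf{a}+\lambda\mathbf{v})-\mathbf{u}(\mathbf{a})}{\lambda}$ is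 the one-sided directional derivative. *)

theory Defs
  imports "HOL-Analysis.Analysis"
begin

definition outcomes :: "(real ^ 'n) set" where
  "outcomes = {a. \<forall>i. 0 \<le> a $ i \<and> a $ i \<le> 1}"

definition vgneq :: "real ^ 'n \<Rightarrow> real ^ 'n \<Rightarrow> bool" where
  "vgneq x y \<longleftrightarrow> (\<forall>i. x $ i \<ge> y $ i) \<and> (\<exists>j. x $ j > y $ j)"

definition public_goods_utility :: "(real ^ 'n \<Rightarrow> real ^ 'n) \<Rightarrow> bool" where
  "public_goods_utility u \<longleftrightarrow>
     (\<forall>a \<in> outcomes. u a \<in> outcomes) \<and>
     continuous_on outcomes u \<and>
     (\<forall>i. concave_on outcomes (\<lambda>a. u a $ i)) \<and>
     (\<forall>a \<in> outcomes. \<forall>a' \<in> outcomes. \<forall>i.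
        vgneq a a' \<and> a $ i = a' $ i \<longrightarrow> u a $ i > u a' $ i)"

definition pareto_efficient :: "(real ^ 'n \<Rightarrow> real ^ 'n) \<Rightarrow> real ^ 'n \<Rightarrow> bool" where
  "pareto_efficient u a \<longleftrightarrow> \<not> (\<exists>a' \<in> outcomes. vgneq (u a') (u a))"

definition has_dir_deriv ::
  "(real ^ 'n \<Rightarrow> real ^ 'n) \<Rightarrow> real ^ 'n \<Rightarrow> real ^ 'n \<Rightarrow> real ^ 'n \<Rightarrow> bool" where
  "has_dir_deriv u a v D \<longleftrightarrow>
     ((\<lambda>t. (u (a + t *\<^sub>R v) - u a) /\<^sub>R t) \<longlongrightarrow> D) (at_right 0)"

end

theory Submission
  imports Defs
begin

(* At an interior point a, every component of the concave utility has a one-sided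
   directional derivative D v in every direction v, and v \<mapsto> D v is concave and
   positively homogeneous, hence superadditive and continuous. Positive externalities
   make (D v) $ k > 0 whenever v \<ge> 0 is nonzero with v $ k = 0.

   Sufficiency: if a + w were a Pareto improvement, a suitable multiple c v of v_up
   (or of v_down) dominates w and touches it in some coordinate k; superadditivity gives
   (D w) $ k + (D (c v - w)) $ k \<le> c (D v) $ k \<le> 0, while concavity gives
   D w \<ge> u (a + w) - u a \<gneq> 0.

   Necessity: D v \<ge> - L v for v \<ge> 0 and some L, so Brouwer's theorem applied to
   v \<mapsto> D v + (L + 1) v, normalised to the simplex, yields an eigenvector D v = s v
   in the simplex, in the manner of Perron and Frobenius. Externalities force v > 0,
   and efficiency forces s \<le> 0. Applying the same argument to v \<mapsto> - D (- v)
   produces v_down. *)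

section \<open>Nonnegative vectors and the standard simplex\<close>

lemma nonneg_vector_cases:
  fixes x :: "real ^ 'n"
  assumes "\<forall>j. 0 \<le> x $ j"
  obtains "x = 0" | j where "0 < x $ j"
  using assms by (metis order_antisym not_less vec_eq_iff zero_index)

lemma ex_dominating_multiple_pos:
  fixes v w :: "real ^ 'n"
  assumes v: "\<forall>i. 0 < v $ i" and "\<exists>j. 0 \<le> w $ j"
  obtains c k where "0 \<le> c" "\<forall>j. w $ j \<le> c * v $ j" "w $ k = c * v $ k"
proof -
  define c where "c = Max (range (\<lambda>j. w $ j / v $ j))"
  have "c \<in> range (\<lambda>j. w $ j / v $ j)" unfolding c_def by (rule Max_in) auto
  then obtain k where k: "c = w $ k / v $ k" by blast
  have le: "w $ j / v $ j \<le> c" for j unfolding c_def by (rule Max_ge) auto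
  obtain j where "0 \<le> w $ j" using assms(2) by blast
  then have "0 \<le> c" using le[of j] v by (meson order_trans zero_le_divide_iff less_imp_le)
  moreover have "w $ j \<le> c * v $ j" for j using le[of j] v by (simp add: pos_divide_le_eq)
  moreover have "w $ k = c * v $ k" using k v[rule_format, of k] by simp
  ultimately show thesis using that by blast
qed

lemma ex_dominating_multiple_neg:
  fixes v w :: "real ^ 'n"
  assumes v: "\<forall>i. v $ i < 0" and w: "\<forall>j. w $ j \<le> 0"
  obtains c k where "0 \<le> c" "\<forall>j. w $ j \<le> c * v $ j" "w $ k = c * v $ k"
proof -
  define c where "c = Min (range (\<lambda>j. w $ j / v $ j))"
  have "c \<in> range (\<lambda>j. w $ j / v $ j)" unfolding c_def by (rule Min_in) auto
  then obtain k where k: "c = w $ k / v $ k" by blast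
  have ge: "c \<le> w $ j / v $ j" for j unfolding c_def by (rule Min_le) auto
  have "0 \<le> c" using k v w by (simp add: divide_nonpos_neg less_imp_le)
  moreover have "w $ j \<le> c * v $ j" for j using ge[of j] v by (simp add: neg_le_divide_eq)
  moreover have "w $ k = c * v $ k" using k v by (simp add: less_imp_neq)
  ultimately show thesis using that by blast
qed

definition std_simplex :: "(real ^ 'n) set" where
  "std_simplex = {v. (\<forall>i. 0 \<le> v $ i) \<and> (\<Sum>i\<in>UNIV. v $ i) = 1}"

lemma compact_std_simplex: "compact (std_simplex :: (real ^ 'n) set)"
proof -
  have "std_simplex = {v::real ^ 'n. \<forall>i. 0 \<le> v $ i} \<inter> {v. (\<Sum>i\<in>UNIV. v $ i) = 1}"
    unfolding std_simplex_def by auto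
  moreover have "closed {v::real ^ 'n. (\<Sum>i\<in>UNIV. v $ i) = 1}"
    by (rule closed_Collect_eq) (intro continuous_intros)+
  ultimately have "closed (std_simplex :: (real ^ 'n) set)"
    using closed_positive_orthant by (metis closed_Int)
  moreover have "bounded (std_simplex :: (real ^ 'n) set)"
    unfolding bounded_iff
  proof (intro exI ballI)
    fix v :: "real ^ 'n" assume "v \<in> std_simplex"
    then have "(\<Sum>i\<in>UNIV. \<bar>v $ i\<bar>) = 1" unfolding std_simplex_def by simp
    then show "norm v \<le> 1" using norm_le_l1_cart[of v] by simp
  qed
  ultimately show ?thesis using compact_eq_bounded_closed by blast
qed

lemma convex_std_simplex: "convex (std_simplex :: (real ^ 'n) set)"
  unfolding convex_def std_simplex_def
  by (auto simp: sum.distrib sum_distrib_left[symmetric])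

lemma axis_in_std_simplex: "axis i 1 \<in> std_simplex"
  unfolding std_simplex_def axis_def by auto

lemma std_simplex_nonneg: "v \<in> std_simplex \<Longrightarrow> 0 \<le> v $ i"
  unfolding std_simplex_def by blast

lemma std_simplex_ex_pos:
  assumes "v \<in> std_simplex" shows "\<exists>j. 0 < v $ j"
proof -
  have "v \<noteq> 0" using assms unfolding std_simplex_def by auto
  then show ?thesis
    using nonneg_vector_cases[of v] std_simplex_nonneg[OF assms] by blast
qed

lemma std_simplex_eigenvector:
  fixes H :: "real ^ 'n \<Rightarrow> real ^ 'n"
  assumes cont: "continuous_on UNIV H"
    and lower: "\<And>v i. v \<in> std_simplex \<Longrightarrow> v $ i \<le> H v $ i + L * v $ i"
  shows "\<exists>v \<in> std_simplex. \<exists>s. H v = s *\<^sub>R v"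
proof -
  define total where "total v = (\<Sum>i\<in>UNIV. H v $ i + L * v $ i)" for v
  define F where "F v = inverse (total v) *\<^sub>R (H v + L *\<^sub>R v)" for v
  have total_ge_1: "1 \<le> total v" if "v \<in> std_simplex" for v
  proof -
    have "1 = (\<Sum>i\<in>UNIV. v $ i)" using that unfolding std_simplex_def by simp
    also have "\<dots> \<le> total v" unfolding total_def by (rule sum_mono) (rule lower[OF that])
    finally show ?thesis .
  qed
  have "continuous_on std_simplex total" unfolding total_def
    by (intro continuous_intros continuous_on_subset[OF cont]) auto
  then have "continuous_on std_simplex F" unfolding F_def
    by (intro continuous_intros continuous_on_subset[OF cont]) (use total_ge_1 in force)+
  moreover have "F \<in> std_simplex \<rightarrow> std_simplex"
  proof
    fix v :: "real ^ 'n" assume v: "v \<in> std_simplex"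
    have pos: "0 < inverse (total v)" using total_ge_1[OF v] by simp
    have "0 \<le> F v $ i" for i
      unfolding F_def using lower[OF v, of i] std_simplex_nonneg[OF v, of i] pos by simp
    moreover have "(\<Sum>i\<in>UNIV. F v $ i) = inverse (total v) * total v"
      unfolding F_def total_def by (simp add: sum_distrib_left)
    ultimately show "F v \<in> std_simplex" unfolding std_simplex_def using pos by simp
  qed
  ultimately obtain v where v: "v \<in> std_simplex" "F v = v"
    using brouwer[OF compact_std_simplex convex_std_simplex] axis_in_std_simplex by blast
  have "total v *\<^sub>R F v = H v + L *\<^sub>R v" unfolding F_def using total_ge_1[OF v(1)] by simp
  then have "H v = (total v - L) *\<^sub>R v" using v(2) by (simp add: algebra_simps)
  then show ?thesis using v(1) by blast
qed

section \<open>One-sided directional derivatives\<close>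

definition diff_quot :: "(real ^ 'n \<Rightarrow> real ^ 'n) \<Rightarrow> real ^ 'n \<Rightarrow> real ^ 'n \<Rightarrow> real \<Rightarrow> real ^ 'n" where
  "diff_quot u a x t = (u (a + t *\<^sub>R x) - u a) /\<^sub>R t"

lemma diff_quot_nth: "diff_quot u a x t $ i = (u (a + t *\<^sub>R x) $ i - u a $ i) / t"
  by (simp add: diff_quot_def divide_inverse_commute)

lemma has_dir_deriv_iff_diff_quot:
  "has_dir_deriv u a x D \<longleftrightarrow> (diff_quot u a x \<longlongrightarrow> D) (at_right 0)"
  unfolding has_dir_deriv_def diff_quot_def by simp

lemma has_dir_deriv_nth:
  "has_dir_deriv u a x D \<Longrightarrow> ((\<lambda>t. diff_quot u a x t $ i) \<longlongrightarrow> D $ i) (at_right 0)"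
  unfolding has_dir_deriv_iff_diff_quot by (rule tendsto_vec_nth)

lemma has_dir_deriv_unique: "has_dir_deriv u a x D \<Longrightarrow> has_dir_deriv u a x D' \<Longrightarrow> D = D'"
  unfolding has_dir_deriv_def using tendsto_unique[OF trivial_limit_at_right_real] by blast

lemma has_dir_deriv_zero: "has_dir_deriv u a 0 0"
  unfolding has_dir_deriv_def by simp

lemma has_dir_deriv_scaleR:
  assumes c: "0 \<le> c" and D: "has_dir_deriv u a x D"
  shows "has_dir_deriv u a (c *\<^sub>R x) (c *\<^sub>R D)"
proof (cases "c = 0")
  case True
  then show ?thesis using has_dir_deriv_zero by simp
next
  case False
  with c have c: "0 < c" by simp
  have "filterlim (\<lambda>t. c * t) (at_right 0) (at_right (0::real))"
    unfolding filterlim_at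
  proof
    show "\<forall>\<^sub>F t in at_right 0. c * t \<in> {0<..} \<and> c * t \<noteq> 0"
      using eventually_at_right_less[of 0] by eventually_elim (use c in auto)
    show "((\<lambda>t. c * t) \<longlongrightarrow> 0) (at_right 0)"
      by (rule tendsto_mult_right_zero) (rule tendsto_ident_at)
  qed
  from filterlim_compose[OF D[unfolded has_dir_deriv_iff_diff_quot] this]
  have "((\<lambda>t. c *\<^sub>R diff_quot u a x (c * t)) \<longlongrightarrow> c *\<^sub>R D) (at_right 0)"
    by (intro tendsto_scaleR tendsto_const)
  moreover have "c *\<^sub>R diff_quot u a x (c * t) = diff_quot u a (c *\<^sub>R x) t" for t
  proof -
    have ci: "c * (inverse c * inverse t) = inverse t" using c by simp
    show ?thesis unfolding diff_quot_def by (simp add: ci scaleR_right_diff_distrib mult.commute)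
  qed
  ultimately show ?thesis unfolding has_dir_deriv_iff_diff_quot by simp
qed

locale concave_at_interior =
  fixes S :: "(real ^ 'n) set" and u :: "real ^ 'n \<Rightarrow> real ^ 'n" and a :: "real ^ 'n"
  assumes concave: "\<And>i. concave_on S (\<lambda>x. u x $ i)"
    and interior: "a \<in> interior S"
begin

lemma a_in_S: "a \<in> S"
  using interior interior_subset by blast

lemma ex_segment_in:
  obtains T where "0 < T" "\<And>t. \<bar>t\<bar> \<le> T \<Longrightarrow> a + t *\<^sub>R x \<in> S"
proof -
  obtain e where e: "0 < e" "cball a e \<subseteq> S" using interior mem_interior_cball by blast
  define T where "T = e / (norm x + 1)"
  have nx: "0 < norm x + 1" using norm_ge_zero[of x] by linarith
  have "a + t *\<^sub>R x \<in> S" if "\<bar>t\<bar> \<le> T" for t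
  proof -
    have "\<bar>t\<bar> * norm x \<le> T * (norm x + 1)" using that nx by (intro mult_mono) auto
    also have "\<dots> = e" unfolding T_def using nx by simp
    finally show ?thesis using e(2) by (auto simp: dist_norm)
  qed
  moreover have "0 < T" unfolding T_def using e(1) nx by simp
  ultimately show thesis using that by blast
qed

lemma eventually_in: "eventually (\<lambda>t. a + t *\<^sub>R x \<in> S) (at_right 0)"
proof -
  obtain T where T: "0 < T" "\<And>t. \<bar>t\<bar> \<le> T \<Longrightarrow> a + t *\<^sub>R x \<in> S" using ex_segment_in by blast
  show ?thesis using eventually_at_right_real[OF T(1)] by eventually_elim (use T in auto)
qed

lemma diff_quot_antimono:
  assumes "0 < s" "s \<le> t" "a + t *\<^sub>R x \<in> S"
  shows "diff_quot u a x t $ i \<le> diff_quot u a x s $ i"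
proof -
  define th where "th = s / t"
  have th: "0 \<le> th" "th \<le> 1" unfolding th_def using assms by auto
  have "a + s *\<^sub>R x = (1 - th) *\<^sub>R a + th *\<^sub>R (a + t *\<^sub>R x)"
    unfolding th_def using assms by (simp add: algebra_simps)
  then have "(1 - th) * u a $ i + th * u (a + t *\<^sub>R x) $ i \<le> u (a + s *\<^sub>R x) $ i"
    using concave_onD[OF concave th a_in_S assms(3), of i] by simp
  then have "th * (u (a + t *\<^sub>R x) $ i - u a $ i) \<le> u (a + s *\<^sub>R x) $ i - u a $ i"
    by (simp add: algebra_simps)
  then have "s * ((u (a + t *\<^sub>R x) $ i - u a $ i) / t) \<le> u (a + s *\<^sub>R x) $ i - u a $ i"
    unfolding th_def by (simp add: field_simps)
  then show ?thesis unfolding diff_quot_nth using assms(1) by (simp add: field_simps)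
qed

lemma diff_quot_le_backward:
  assumes "0 < s" "0 < t" "a - s *\<^sub>R x \<in> S" "a + t *\<^sub>R x \<in> S"
  shows "diff_quot u a x t $ i \<le> (u a $ i - u (a - s *\<^sub>R x) $ i) / s"
proof -
  define th where "th = s / (s + t)"
  have th: "0 \<le> th" "th \<le> 1" unfolding th_def using assms by auto
  have weights: "(s + t) * (1 - th) = t" "(s + t) * th = s"
    unfolding th_def using assms(1,2) by (simp_all add: field_simps)
  have "(s + t) *\<^sub>R ((1 - th) *\<^sub>R (a - s *\<^sub>R x) + th *\<^sub>R (a + t *\<^sub>R x))
      = t *\<^sub>R (a - s *\<^sub>R x) + s *\<^sub>R (a + t *\<^sub>R x)"
    using weights by (simp add: scaleR_add_right)
  also have "\<dots> = (s + t) *\<^sub>R a" by (simp add: algebra_simps)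
  finally have "a = (1 - th) *\<^sub>R (a - s *\<^sub>R x) + th *\<^sub>R (a + t *\<^sub>R x)"
    using assms(1,2) by (metis add_pos_pos less_irrefl scaleR_cancel_left)
  then have "(1 - th) * u (a - s *\<^sub>R x) $ i + th * u (a + t *\<^sub>R x) $ i \<le> u a $ i"
    using concave_onD[OF concave th assms(3,4), of i] by simp
  then have "(s + t) * ((1 - th) * u (a - s *\<^sub>R x) $ i + th * u (a + t *\<^sub>R x) $ i) \<le> (s + t) * u a $ i"
    using assms(1,2) by (intro mult_left_mono) auto
  then have "t * u (a - s *\<^sub>R x) $ i + s * u (a + t *\<^sub>R x) $ i \<le> (s + t) * u a $ i"
    using weights by (simp add: distrib_left mult.assoc[symmetric])
  then have "s * (u (a + t *\<^sub>R x) $ i - u a $ i) \<le> t * (u a $ i - u (a - s *\<^sub>R x) $ i)"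
    by (simp add: algebra_simps)
  then show ?thesis unfolding diff_quot_nth using assms(1,2) by (simp add: field_simps)
qed

lemma ex_has_dir_deriv: "\<exists>D. has_dir_deriv u a x D"
proof -
  obtain T where T: "0 < T" "\<And>t. \<bar>t\<bar> \<le> T \<Longrightarrow> a + t *\<^sub>R x \<in> S" using ex_segment_in by blast
  define I where "I = {0<..} \<inter> {..T}"
  define lim where "lim i = Inf ((\<lambda>t. - diff_quot u a x t $ i) ` I)" for i
  have "((\<lambda>t. - diff_quot u a x t $ i) \<longlongrightarrow> lim i) (at 0 within I)" for i
    unfolding lim_def I_def
  proof (rule Lim_right_bound[where K = "- ((u a $ i - u (a - T *\<^sub>R x) $ i) / T)"])
    fix p q :: real assume "p \<in> {..T}" "q \<in> {..T}" "0 < p" "p \<le> q"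
    then show "- diff_quot u a x p $ i \<le> - diff_quot u a x q $ i"
      using diff_quot_antimono[of p q x i] T by simp
  next
    fix p :: real assume "p \<in> {..T}" "0 < p"
    then show "- ((u a $ i - u (a - T *\<^sub>R x) $ i) / T) \<le> - diff_quot u a x p $ i"
      using diff_quot_le_backward[of T p x i] T(1) T(2)[of "- T"] T(2)[of p] by simp
  qed
  moreover have "at (0::real) within I = at_right 0"
    unfolding I_def by (rule at_within_nhd[where S = "{..<T}"]) (use T in auto)
  ultimately have "((\<lambda>t. diff_quot u a x t $ i) \<longlongrightarrow> - lim i) (at_right 0)" for i
    using tendsto_minus by fastforce
  then have "(diff_quot u a x \<longlongrightarrow> (\<chi> i. - lim i)) (at_right 0)"
    by (intro vec_tendstoI) simp
  then show ?thesis unfolding has_dir_deriv_iff_diff_quot by blast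
qed

lemma diff_quot_le_has_dir_deriv:
  assumes "0 < t" "a + t *\<^sub>R x \<in> S" and D: "has_dir_deriv u a x D"
  shows "diff_quot u a x t $ i \<le> D $ i"
proof (rule tendsto_lowerbound[OF has_dir_deriv_nth[OF D] _ trivial_limit_at_right_real])
  show "\<forall>\<^sub>F s in at_right 0. diff_quot u a x t $ i \<le> diff_quot u a x s $ i"
    using eventually_at_right_real[OF assms(1)]
    by eventually_elim (rule diff_quot_antimono, use assms in auto)
qed

lemma has_dir_deriv_le_backward:
  assumes "0 < t" "a - t *\<^sub>R x \<in> S" and D: "has_dir_deriv u a x D"
  shows "D $ i \<le> (u a $ i - u (a - t *\<^sub>R x) $ i) / t"
proof (rule tendsto_upperbound[OF has_dir_deriv_nth[OF D] _ trivial_limit_at_right_real])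
  show "\<forall>\<^sub>F s in at_right 0. diff_quot u a x s $ i \<le> (u a $ i - u (a - t *\<^sub>R x) $ i) / t"
    using eventually_in[of x] eventually_at_right_less[of 0]
    by eventually_elim (rule diff_quot_le_backward, use assms in auto)
qed

lemma has_dir_deriv_ge_increment:
  assumes "a + w \<in> S" "has_dir_deriv u a w D"
  shows "u (a + w) $ i - u a $ i \<le> D $ i"
  using diff_quot_le_has_dir_deriv[of 1 w D i] assms by (simp add: diff_quot_nth)

lemma has_dir_deriv_concave:
  assumes th: "0 \<le> th" "th \<le> 1"
    and Dx: "has_dir_deriv u a x Dx" and Dy: "has_dir_deriv u a y Dy"
    and Dz: "has_dir_deriv u a ((1 - th) *\<^sub>R x + th *\<^sub>R y) Dz"
  shows "(1 - th) * Dx $ i + th * Dy $ i \<le> Dz $ i"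
proof (rule tendsto_le[OF trivial_limit_at_right_real has_dir_deriv_nth[OF Dz]])
  show "((\<lambda>t. (1 - th) * diff_quot u a x t $ i + th * diff_quot u a y t $ i)
      \<longlongrightarrow> (1 - th) * Dx $ i + th * Dy $ i) (at_right 0)"
    using Dx Dy unfolding has_dir_deriv_iff_diff_quot by (intro tendsto_intros)
  show "\<forall>\<^sub>F t in at_right 0. (1 - th) * diff_quot u a x t $ i + th * diff_quot u a y t $ i
      \<le> diff_quot u a ((1 - th) *\<^sub>R x + th *\<^sub>R y) t $ i"
    using eventually_in[of x] eventually_in[of y] eventually_at_right_less[of 0]
  proof eventually_elim
    case (elim t)
    have "a + t *\<^sub>R ((1 - th) *\<^sub>R x + th *\<^sub>R y) = (1 - th) *\<^sub>R (a + t *\<^sub>R x) + th *\<^sub>R (a + t *\<^sub>R y)"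
      by (simp add: algebra_simps)
    then have "(1 - th) * u (a + t *\<^sub>R x) $ i + th * u (a + t *\<^sub>R y) $ i
        \<le> u (a + t *\<^sub>R ((1 - th) *\<^sub>R x + th *\<^sub>R y)) $ i"
      using concave_onD[OF concave th, of "a + t *\<^sub>R x" "a + t *\<^sub>R y" i] elim by simp
    moreover have "(1 - th) * ((P - A) / t) + th * ((Q - A) / t) \<le> (R - A) / t"
      if "(1 - th) * P + th * Q \<le> R" for P Q R A :: real
    proof -
      have "(1 - th) * ((P - A) / t) + th * ((Q - A) / t) = ((1 - th) * P + th * Q - A) / t"
        using elim(3) by (simp add: field_simps)
      then show ?thesis using that elim(3) by (simp add: divide_right_mono)
    qed
    ultimately show ?case unfolding diff_quot_nth by blast
  qed
qed

lemma has_dir_deriv_superadd: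
  assumes "has_dir_deriv u a x Dx" "has_dir_deriv u a y Dy" "has_dir_deriv u a (x + y) Dz"
  shows "Dx $ i + Dy $ i \<le> Dz $ i"
proof -
  have "has_dir_deriv u a ((1 - 1/2) *\<^sub>R x + (1/2) *\<^sub>R y) ((1/2) *\<^sub>R Dz)"
    using has_dir_deriv_scaleR[of "1/2", OF _ assms(3)] by (simp add: algebra_simps)
  from has_dir_deriv_concave[OF _ _ assms(1,2) this, of i] show ?thesis by simp
qed

definition dir_deriv :: "real ^ 'n \<Rightarrow> real ^ 'n" where
  "dir_deriv x = (SOME D. has_dir_deriv u a x D)"

lemma has_dir_deriv_dir_deriv: "has_dir_deriv u a x (dir_deriv x)"
  unfolding dir_deriv_def using ex_has_dir_deriv by (rule someI_ex)

lemma dir_deriv_eqI: "has_dir_deriv u a x D \<Longrightarrow> dir_deriv x = D"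
  using has_dir_deriv_unique has_dir_deriv_dir_deriv by blast

lemma dir_deriv_superadd: "dir_deriv x $ i + dir_deriv y $ i \<le> dir_deriv (x + y) $ i"
  by (rule has_dir_deriv_superadd) (rule has_dir_deriv_dir_deriv)+

lemma dir_deriv_le_neg_minus: "dir_deriv x $ i \<le> - dir_deriv (- x) $ i"
  using dir_deriv_superadd[where x = x and y = "- x" and i = i] dir_deriv_eqI[OF has_dir_deriv_zero] by simp

lemma continuous_on_dir_deriv: "continuous_on UNIV dir_deriv"
proof -
  have "convex_on UNIV (\<lambda>x. - dir_deriv x $ i)" for i
    unfolding convex_on_def
  proof (intro conjI convex_UNIV ballI allI impI)
    fix x y :: "real ^ 'n" and p q :: real
    assume "0 \<le> p" "0 \<le> q" "p + q = 1"
    then have p: "p = 1 - q" by simp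
    have "(1 - q) * dir_deriv x $ i + q * dir_deriv y $ i \<le> dir_deriv ((1 - q) *\<^sub>R x + q *\<^sub>R y) $ i"
      by (rule has_dir_deriv_concave) (use \<open>0 \<le> q\<close> p \<open>0 \<le> p\<close> has_dir_deriv_dir_deriv in auto)
    then show "- dir_deriv (p *\<^sub>R x + q *\<^sub>R y) $ i \<le> p * - dir_deriv x $ i + q * - dir_deriv y $ i"
      unfolding p by simp
  qed
  then have "continuous_on UNIV (\<lambda>x. - dir_deriv x $ i)" for i
    by (rule convex_on_continuous[OF open_UNIV])
  then have "continuous_on UNIV (\<lambda>x. dir_deriv x $ i)" for i
    using continuous_on_minus by fastforce
  then show ?thesis using continuous_on_vec_lambda[of UNIV "\<lambda>i x. dir_deriv x $ i"] by simp
qed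

end

section \<open>Public goods economies\<close>

locale public_goods_interior =
  fixes u :: "real ^ 'n \<Rightarrow> real ^ 'n" and a :: "real ^ 'n"
  assumes utility: "public_goods_utility u"
    and strictly_inside: "\<forall>i. 0 < a $ i \<and> a $ i < 1"

lemma (in public_goods_interior) interior_outcomes: "a \<in> interior outcomes"
proof (rule interiorI)
  show "open (box 0 (vec 1) :: (real ^ 'n) set)" by (rule open_box)
  show "a \<in> box 0 (vec 1)" using strictly_inside by (simp add: mem_box_cart)
  show "box 0 (vec 1) \<subseteq> outcomes" by (auto simp: mem_box_cart outcomes_def less_imp_le)
qed

sublocale public_goods_interior \<subseteq> concave_at_interior outcomes u a
  using utility interior_outcomes unfolding public_goods_utility_def
  by unfold_locales blast+

context public_goods_interior
begin

lemma utility_strict_mono: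
  assumes "x \<in> outcomes" "y \<in> outcomes" "\<forall>j. y $ j \<le> x $ j" "y $ k < x $ k" "x $ i = y $ i"
  shows "u y $ i < u x $ i"
  using utility assms unfolding public_goods_utility_def vgneq_def by blast

lemma dir_deriv_pos_off_support:
  assumes "\<forall>j. 0 \<le> x $ j" "x $ k = 0" "0 < x $ j"
  shows "0 < dir_deriv x $ k"
proof -
  obtain T where T: "0 < T" "\<And>t. \<bar>t\<bar> \<le> T \<Longrightarrow> a + t *\<^sub>R x \<in> outcomes"
    using ex_segment_in by blast
  have "u a $ k < u (a + T *\<^sub>R x) $ k"
    by (rule utility_strict_mono[where k = j]) (use T assms a_in_S in auto)
  then have "0 < diff_quot u a x T $ k" unfolding diff_quot_nth using T by simp
  also have "\<dots> \<le> dir_deriv x $ k"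
    by (rule diff_quot_le_has_dir_deriv) (use T has_dir_deriv_dir_deriv in auto)
  finally show ?thesis .
qed

lemma dir_deriv_neg_off_support:
  assumes "\<forall>j. x $ j \<le> 0" "x $ k = 0" "x $ j < 0"
  shows "dir_deriv x $ k < 0"
proof -
  obtain T where T: "0 < T" "\<And>t. \<bar>t\<bar> \<le> T \<Longrightarrow> a + t *\<^sub>R x \<in> outcomes"
    using ex_segment_in by blast
  have opposite: "a - T *\<^sub>R x \<in> outcomes" using T(2)[of "- T"] T(1) by simp
  have "u a $ k < u (a - T *\<^sub>R x) $ k"
    by (rule utility_strict_mono[where k = j])
       (use T assms a_in_S opposite in \<open>auto simp: mult_pos_neg mult_nonneg_nonpos\<close>)
  have "dir_deriv x $ k \<le> (u a $ k - u (a - T *\<^sub>R x) $ k) / T"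
    by (rule has_dir_deriv_le_backward) (use T opposite has_dir_deriv_dir_deriv in auto)
  also have "\<dots> < 0" using \<open>u a $ k < u (a - T *\<^sub>R x) $ k\<close> T(1) by (simp add: divide_neg_pos)
  finally show ?thesis .
qed

lemma dir_deriv_nonneg_off_support:
  assumes "\<forall>j. 0 \<le> x $ j" "x $ k = 0"
  shows "0 \<le> dir_deriv x $ k"
  using assms(1)
proof (cases rule: nonneg_vector_cases)
  case 1
  then show ?thesis using dir_deriv_eqI[OF has_dir_deriv_zero] by simp
next
  case (2 j)
  then show ?thesis using dir_deriv_pos_off_support[OF assms] by (simp add: less_imp_le)
qed

lemma dir_deriv_linear_lower_bound:
  obtains L where "\<And>v i. \<forall>j. 0 \<le> v $ j \<Longrightarrow> - L * v $ i \<le> dir_deriv v $ i"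
proof -
  define L where "L = (\<Sum>i\<in>UNIV. \<bar>dir_deriv (axis i 1) $ i\<bar>)"
  have "- L * v $ i \<le> dir_deriv v $ i" if v: "\<forall>j. 0 \<le> v $ j" for v i
  proof -
    define e where "e = axis i (1::real)"
    define w where "w = v - v $ i *\<^sub>R e"
    have scaled: "has_dir_deriv u a (v $ i *\<^sub>R e) (v $ i *\<^sub>R dir_deriv e)"
      using v has_dir_deriv_scaleR has_dir_deriv_dir_deriv by blast
    have "\<bar>dir_deriv e $ i\<bar> \<le> L" unfolding L_def e_def by (rule member_le_sum) simp_all
    then have "- L * v $ i \<le> - \<bar>dir_deriv e $ i\<bar> * v $ i" using v by (intro mult_right_mono) auto
    also have "\<dots> \<le> dir_deriv e $ i * v $ i" using v by (intro mult_right_mono) auto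
    also have "\<dots> = v $ i * dir_deriv e $ i" by (rule mult.commute)
    also have "\<dots> \<le> v $ i * dir_deriv e $ i + dir_deriv w $ i"
      using dir_deriv_nonneg_off_support[of w i] v by (simp add: w_def e_def axis_def)
    also have "\<dots> \<le> dir_deriv v $ i"
    proof -
      have "v $ i *\<^sub>R e + w = v" unfolding w_def by simp
      then show ?thesis
        using has_dir_deriv_superadd[OF scaled has_dir_deriv_dir_deriv has_dir_deriv_dir_deriv,
            where y = w and i = i] by simp
    qed
    finally show ?thesis .
  qed
  then show thesis using that by blast
qed

lemma pareto_efficient_no_increasing_direction:
  assumes "pareto_efficient u a" "has_dir_deriv u a x D"
  shows "\<exists>i. D $ i \<le> 0"
proof (rule ccontr)
  assume "\<not> (\<exists>i. D $ i \<le> 0)"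
  then have "\<forall>\<^sub>F t in at_right 0. \<forall>i. 0 < diff_quot u a x t $ i"
    by (intro eventually_all_finite order_tendstoD(1)[OF has_dir_deriv_nth[OF assms(2)]])
       (auto simp: not_le)
  then have "\<forall>\<^sub>F t in at_right 0. (\<forall>i. 0 < diff_quot u a x t $ i) \<and> a + t *\<^sub>R x \<in> outcomes \<and> 0 < t"
    using eventually_in[of x] eventually_at_right_less[of 0] by eventually_elim auto
  then obtain t where t: "\<forall>i. 0 < diff_quot u a x t $ i" "a + t *\<^sub>R x \<in> outcomes" "0 < t"
    using eventually_happens'[OF trivial_limit_at_right_real] by blast
  then have "u a $ i < u (a + t *\<^sub>R x) $ i" for i
    using t(1)[rule_format, of i] unfolding diff_quot_nth by (simp add: zero_less_divide_iff)
  then have "vgneq (u (a + t *\<^sub>R x)) (u a)" unfolding vgneq_def by (auto intro: less_imp_le)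
  then show False using assms(1) t(2) unfolding pareto_efficient_def by blast
qed

lemma no_improvement_dominated_by_multiple:
  assumes a': "a' \<in> outcomes" "vgneq (u a') (u a)"
    and D: "has_dir_deriv u a v D" "\<forall>j. D $ j \<le> 0"
    and c: "0 \<le> c" "\<forall>j. (a' - a) $ j \<le> c * v $ j" "(a' - a) $ k = c * v $ k"
  shows False
proof -
  define w where "w = a' - a"
  define z where "z = c *\<^sub>R v - w"
  have "w + z = c *\<^sub>R v" unfolding z_def by simp
  then have sum_le: "dir_deriv w $ j + dir_deriv z $ j \<le> c * D $ j" for j
    using dir_deriv_superadd[where x = w and y = z and i = j]
      dir_deriv_eqI[OF has_dir_deriv_scaleR[OF c(1) D(1)]] by simp
  have cD: "c * D $ j \<le> 0" for j using c(1) D(2) by (simp add: mult_nonneg_nonpos)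
  have gain: "u a' $ j - u a $ j \<le> dir_deriv w $ j" for j
    using has_dir_deriv_ge_increment[OF _ has_dir_deriv_dir_deriv, where w = w] a'(1)
    unfolding w_def by simp
  have z: "\<forall>j. 0 \<le> z $ j" "z $ k = 0" using c(2,3) unfolding z_def w_def by auto
  from z(1) show False
  proof (cases rule: nonneg_vector_cases)
    case 1
    then have "dir_deriv z = 0" using dir_deriv_eqI[OF has_dir_deriv_zero] by simp
    obtain j where "u a $ j < u a' $ j" using a'(2) unfolding vgneq_def by blast
    then show False using gain[of j] sum_le[of j] cD[of j] \<open>dir_deriv z = 0\<close> by simp
  next
    case (2 j)
    then have "0 < dir_deriv z $ k" using dir_deriv_pos_off_support[OF z] by blast
    moreover have "u a $ k \<le> u a' $ k" using a'(2) unfolding vgneq_def by blast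
    ultimately show False using gain[of k] sum_le[of k] cD[of k] by simp
  qed
qed

lemma pareto_efficient_if_nonincreasing_directions:
  assumes up: "\<forall>i. 0 < v_up $ i" "has_dir_deriv u a v_up D_up" "\<forall>i. D_up $ i \<le> 0"
    and down: "\<forall>i. v_down $ i < 0" "has_dir_deriv u a v_down D_down" "\<forall>i. D_down $ i \<le> 0"
  shows "pareto_efficient u a"
  unfolding pareto_efficient_def
proof
  assume "\<exists>a' \<in> outcomes. vgneq (u a') (u a)"
  then obtain a' where a': "a' \<in> outcomes" "vgneq (u a') (u a)" by blast
  show False
  proof (cases "\<exists>j. 0 \<le> (a' - a) $ j")
    case True
    with up(1) obtain c k
      where "0 \<le> c" "\<forall>j. (a' - a) $ j \<le> c * v_up $ j" "(a' - a) $ k = c * v_up $ k"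
      by (rule ex_dominating_multiple_pos)
    then show False using no_improvement_dominated_by_multiple[OF a' up(2,3)] by blast
  next
    case False
    then have "\<forall>j. (a' - a) $ j \<le> 0" by (auto simp: not_le intro: less_imp_le)
    with down(1) obtain c k
      where "0 \<le> c" "\<forall>j. (a' - a) $ j \<le> c * v_down $ j" "(a' - a) $ k = c * v_down $ k"
      by (rule ex_dominating_multiple_neg)
    then show False using no_improvement_dominated_by_multiple[OF a' down(2,3)] by blast
  qed
qed

lemma pareto_efficient_ex_eigendirection:
  assumes pe: "pareto_efficient u a" and sign: "\<sigma> = 1 \<or> \<sigma> = - 1"
  obtains y where "\<forall>i. 0 < y $ i" "\<forall>i. dir_deriv (\<sigma> *\<^sub>R y) $ i \<le> 0"
proof -
  define G where "G y = \<sigma> *\<^sub>R dir_deriv (\<sigma> *\<^sub>R y)" for y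
  obtain L where L: "\<And>v i. \<forall>j. 0 \<le> v $ j \<Longrightarrow> - L * v $ i \<le> dir_deriv v $ i"
    by (meson dir_deriv_linear_lower_bound)
  have "continuous_on UNIV (\<lambda>y. dir_deriv (\<sigma> *\<^sub>R y))"
    by (rule continuous_on_compose2[OF continuous_on_dir_deriv]) (auto intro: continuous_intros)
  then have "continuous_on UNIV G" unfolding G_def by (intro continuous_intros)
  moreover have "y $ i \<le> G y $ i + (L + 1) * y $ i" if "y \<in> std_simplex" for y i
  proof -
    have "dir_deriv y $ i \<le> G y $ i" using sign dir_deriv_le_neg_minus by (auto simp: G_def)
    moreover have "- L * y $ i \<le> dir_deriv y $ i" using L std_simplex_nonneg[OF that] by blast
    ultimately show ?thesis by (simp add: distrib_right)
  qed
  ultimately obtain y r where y: "y \<in> std_simplex" "G y = r *\<^sub>R y"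
    using std_simplex_eigenvector by blast
  have eigen: "dir_deriv (\<sigma> *\<^sub>R y) = (\<sigma> * r) *\<^sub>R y"
    using sign y(2) unfolding G_def by (auto simp: minus_equation_iff)
  have pos: "\<forall>i. 0 < y $ i"
  proof (rule ccontr)
    assume "\<not> (\<forall>i. 0 < y $ i)"
    then obtain k where k: "y $ k = 0"
      using std_simplex_nonneg[OF y(1)] by (meson not_less order_antisym)
    obtain j where j: "0 < y $ j" using std_simplex_ex_pos[OF y(1)] by blast
    have "0 < G y $ k"
      using sign
    proof
      assume "\<sigma> = 1"
      then show ?thesis
        using dir_deriv_pos_off_support[of y k j] std_simplex_nonneg[OF y(1)] k j by (simp add: G_def)
    next
      assume "\<sigma> = - 1"
      then show ?thesis
        using dir_deriv_neg_off_support[of "- y" k j] std_simplex_nonneg[OF y(1)] k j by (simp add: G_def)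
    qed
    then show False using y(2) k by simp
  qed
  obtain i where "dir_deriv (\<sigma> *\<^sub>R y) $ i \<le> 0"
    using pareto_efficient_no_increasing_direction[OF pe has_dir_deriv_dir_deriv] by blast
  then have "(\<sigma> * r) * y $ i \<le> 0" using eigen by simp
  then have "\<sigma> * r \<le> 0" using pos by (meson mult_pos_pos not_le)
  then have "\<forall>i. dir_deriv (\<sigma> *\<^sub>R y) $ i \<le> 0"
    using eigen pos by (simp add: mult_nonpos_nonneg less_imp_le)
  with pos show thesis by (rule that)
qed

end

theorem lemma4:
  fixes u :: "real ^ 'n \<Rightarrow> real ^ 'n" and a :: "real ^ 'n"
  assumes "public_goods_utility u"
    and "\<forall>i. 0 < a $ i \<and> a $ i < 1"
  shows "pareto_efficient u a \<longleftrightarrow>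
    (\<exists>v_up v_down D_up D_down.
        (\<forall>i. v_up $ i > 0) \<and> (\<forall>i. v_down $ i < 0) \<and>
        has_dir_deriv u a v_up D_up \<and> (\<forall>i. D_up $ i \<le> 0) \<and>
        has_dir_deriv u a v_down D_down \<and> (\<forall>i. D_down $ i \<le> 0))"
proof -
  interpret public_goods_interior u a using assms by unfold_locales
  show ?thesis
  proof
    assume pe: "pareto_efficient u a"
    obtain v_up where up: "\<forall>i. 0 < v_up $ i" "\<forall>i. dir_deriv v_up $ i \<le> 0"
      using pareto_efficient_ex_eigendirection[OF pe, of 1] by auto
    obtain y where down: "\<forall>i. 0 < y $ i" "\<forall>i. dir_deriv (- y) $ i \<le> 0"
      using pareto_efficient_ex_eigendirection[OF pe, of "- 1"] by auto
    show "\<exists>v_up v_down D_up D_down.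
        (\<forall>i. v_up $ i > 0) \<and> (\<forall>i. v_down $ i < 0) \<and>
        has_dir_deriv u a v_up D_up \<and> (\<forall>i. D_up $ i \<le> 0) \<and>
        has_dir_deriv u a v_down D_down \<and> (\<forall>i. D_down $ i \<le> 0)"
      using up down has_dir_deriv_dir_deriv[of v_up] has_dir_deriv_dir_deriv[of "- y"]
      by (intro exI[of _ v_up] exI[of _ "- y"] exI[of _ "dir_deriv v_up"] exI[of _ "dir_deriv (- y)"]) auto
  qed (use pareto_efficient_if_nonincreasing_directions in blast)
qed

end
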